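(* Let $\mathcal{A}_1=(Q,R_1,V_1,V_1',f_1)$ and $\mathcal{A}_2=(Q,R_2,V_2,V_2',f_2)$ be two stochastic CA with the same set of states, with explicit global functions $F_1,F_2$. If they are not deterministic and $S_{F_1}=S_{F_2}$, then $|R_1|$ and $|R_2|$ have a common prime factor, i.e. $\mathscr{PF}(\mathcal{A}_1)\cap\mathscr{PF}(\mathcal{A}_2)\neq\emptyset$.
   Context: A stochastic CA is $(Q,R,V,V',f)$ with $Q$ finite states, $R$ finite random symbols, $V=\{v_1,\dots,v_r\}$, $V'=\{v'_1,\dots,v'_{r'}\}$ finite subsets of $\mathbb{Z}$, $f:Q^r\times R^{r'}\to Q$; explicit global function $F(c,s)_z=f((c_{z+v_1},\dots,c_{z+v_r}),(s_{z+v'_1},\dots,s_{z+v'_{r'}}))$. It is deterministic if $f$ does not depend on its second argument. $\nu_R$ is the uniform Bernoulli measure on $R^{\mathbb{Z}}$; the stochastic global function $S_F:Q^{\mathbb{Z}}\to\mathcal{M}(Q^{\mathbb{Z}})$ is $S_F(c)([u]_z)=\nu_R(\{s: F(c,s)\in[u]_z\})$ for cylinders $[u]_z=\{c:c_{z+x}=u_x,0\le x<|u|\}$. $\mathscr{PF}(\mathcal{A})$ denotes the set of prime factors of $|R|$. *)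

theory Defs
  imports "HOL-Probability.Probability" "HOL-Computational_Algebra.Primes"
begin

text \<open>A stochastic CA (Q,R,V,V',f) is represented by: state type 'q (finite),
 random-symbol type 'r (finite), neighbourhoods V, V' as lists of distinct
 integers [v_1,...,v_r], and local rule f acting on lists of length r and r'.\<close>

definition stoch_ca :: "int list \<Rightarrow> int list \<Rightarrow> ('q list \<Rightarrow> 'r list \<Rightarrow> 'q) \<Rightarrow> bool" where
  "stoch_ca V V' f \<longleftrightarrow> distinct V \<and> distinct V'"

definition deterministic :: "int list \<Rightarrow> int list \<Rightarrow> ('q list \<Rightarrow> 'r list \<Rightarrow> 'q) \<Rightarrow> bool" where
  "deterministic V V' f \<longleftrightarrow>
     (\<forall>qs ss ss'. length qs = length V \<longrightarrow> length ss = length V' \<longrightarrow> length ss' = length V' \<longrightarrow>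
        f qs ss = f qs ss')"

definition global_fun :: "int list \<Rightarrow> int list \<Rightarrow> ('q list \<Rightarrow> 'r list \<Rightarrow> 'q)
    \<Rightarrow> (int \<Rightarrow> 'q) \<Rightarrow> (int \<Rightarrow> 'r) \<Rightarrow> (int \<Rightarrow> 'q)" where
  "global_fun V V' f c s = (\<lambda>z. f (map (\<lambda>v. c (z + v)) V) (map (\<lambda>v. s (z + v)) V'))"

definition cyl :: "'a list \<Rightarrow> int \<Rightarrow> (int \<Rightarrow> 'a) set" where
  "cyl u z = {c. \<forall>x < length u. c (z + int x) = u ! x}"

definition bernoulli_unif :: "(int \<Rightarrow> 'r::finite) measure" where
  "bernoulli_unif = PiM UNIV (\<lambda>_. measure_pmf (pmf_of_set (UNIV :: 'r set)))"

text \<open>Stochastic global function, evaluated on cylinders: S_F(c)([u]_z).\<close>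
definition stoch_global :: "((int \<Rightarrow> 'q) \<Rightarrow> (int \<Rightarrow> 'r::finite) \<Rightarrow> (int \<Rightarrow> 'q))
    \<Rightarrow> (int \<Rightarrow> 'q) \<Rightarrow> 'q list \<Rightarrow> int \<Rightarrow> real" where
  "stoch_global F c u z = measure bernoulli_unif {s \<in> space bernoulli_unif. F c s \<in> cyl u z}"

end

theory Submission
  imports Defs
begin

text \<open>Fix a configuration c and a state q such that the local rule of the first automaton,
  fed with the neighbourhood of c at cell 0, outputs q for some but not all random words. Under
  the uniform Bernoulli measure the probability that cell 0 of the image is q is then
  k1 / |R1|^n1 with 0 < k1 < |R1|^n1, while the second automaton computes the same probability
  as k2 / |R2|^n2. If |R1| and |R2| were coprime, clearing denominators would force |R1|^n1 to
  divide k1, which is impossible.\<close>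

lemma space_bernoulli_unif [simp]: "space bernoulli_unif = UNIV"
  unfolding bernoulli_unif_def by (simp add: space_PiM PiE_def extensional_def)

lemma prob_space_bernoulli_unif: "prob_space bernoulli_unif"
  unfolding bernoulli_unif_def by (rule prob_space_PiM) (rule prob_space_measure_pmf)

lemma word_event_eq_prod_emb:
  fixes W :: "int list" and ws :: "'r::finite list"
  assumes "distinct W" "length ws = length W"
  shows "{s. map s W = ws} =
    prod_emb UNIV (\<lambda>_. measure_pmf (pmf_of_set UNIV)) (set W)
      (PiE (set W) (\<lambda>v. {the (map_of (zip W ws) v)}))"
proof -
  have "map s W = ws \<longleftrightarrow> (\<forall>v\<in>set W. s v = the (map_of (zip W ws) v))" for s :: "int \<Rightarrow> 'r"
  proof
    assume "map s W = ws"
    then show "\<forall>v\<in>set W. s v = the (map_of (zip W ws) v)"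
      using assms by (auto simp: in_set_conv_nth map_of_zip_nth)
  next
    assume "\<forall>v\<in>set W. s v = the (map_of (zip W ws) v)"
    then show "map s W = ws"
      using assms by (intro nth_equalityI) (auto simp: map_of_zip_nth)
  qed
  then show ?thesis by (auto simp: prod_emb_iff extensional_def PiE_iff)
qed

lemma
  fixes W :: "int list" and ws :: "'r::finite list"
  assumes "distinct W" "length ws = length W"
  shows sets_bernoulli_unif_word: "{s. map s W = ws} \<in> sets (bernoulli_unif :: (int \<Rightarrow> 'r) measure)"
    and measure_bernoulli_unif_word:
      "measure (bernoulli_unif :: (int \<Rightarrow> 'r) measure) {s. map s W = ws} = 1 / real CARD('r) ^ length W"
proof -
  note word_event = word_event_eq_prod_emb[OF assms]
  show "{s. map s W = ws} \<in> sets (bernoulli_unif :: (int \<Rightarrow> 'r) measure)"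
    unfolding word_event bernoulli_unif_def by (rule sets_PiM_I) auto
  have "emeasure (bernoulli_unif :: (int \<Rightarrow> 'r) measure) {s. map s W = ws} =
      (\<Prod>v\<in>set W. emeasure (measure_pmf (pmf_of_set UNIV)) {the (map_of (zip W ws) v)})"
    unfolding word_event bernoulli_unif_def
    by (rule emeasure_PiM_emb) (auto intro: prob_space_measure_pmf)
  also have "\<dots> = (\<Prod>v\<in>set W. ennreal (1 / real CARD('r)))"
    by (simp add: measure_pmf.emeasure_eq_measure measure_pmf_single)
  also have "\<dots> = ennreal (1 / real CARD('r) ^ length W)"
    using assms by (simp add: distinct_card prod_ennreal power_one_over ennreal_power)
  finally show "measure (bernoulli_unif :: (int \<Rightarrow> 'r) measure) {s. map s W = ws} =
      1 / real CARD('r) ^ length W"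
    by (simp add: measure_def)
qed

lemma measure_bernoulli_unif_word_in:
  fixes W :: "int list" and P :: "'r::finite list set"
  assumes "distinct W"
  shows "measure (bernoulli_unif :: (int \<Rightarrow> 'r) measure) {s. map s W \<in> P} =
    real (card {ws. length ws = length W \<and> ws \<in> P}) / real CARD('r) ^ length W"
proof -
  interpret prob_space "bernoulli_unif :: (int \<Rightarrow> 'r) measure"
    by (rule prob_space_bernoulli_unif)
  define L where "L = {ws. length ws = length W \<and> ws \<in> P}"
  have "finite L"
    by (rule finite_subset[OF _ finite_lists_length_eq[of "UNIV :: 'r set" "length W"]])
       (auto simp: L_def)
  have "{s. map s W \<in> P} = (\<Union>ws\<in>L. {s. map s W = ws})"
    by (auto simp: L_def)
  then have "prob {s. map s W \<in> P} = (\<Sum>ws\<in>L. prob {s. map s W = ws})"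
    using \<open>finite L\<close> assms
    by (auto simp: L_def disjoint_family_on_def intro!: finite_measure_finite_Union
        sets_bernoulli_unif_word)
  also have "\<dots> = (\<Sum>ws\<in>L. 1 / real CARD('r) ^ length W)"
    using assms by (simp add: L_def measure_bernoulli_unif_word)
  finally show ?thesis by (simp add: L_def)
qed

lemma stoch_global_single_cell:
  fixes f :: "'q list \<Rightarrow> 'r::finite list \<Rightarrow> 'q"
  assumes "distinct V'"
  shows "stoch_global (global_fun V V' f) c [q] 0 =
    real (card {ws. length ws = length V' \<and> f (map c V) ws = q}) / real CARD('r) ^ length V'"
proof -
  have "stoch_global (global_fun V V' f) c [q] 0 =
      measure (bernoulli_unif :: (int \<Rightarrow> 'r) measure) {s. map s V' \<in> {ws. f (map c V) ws = q}}"
    unfolding stoch_global_def by (simp add: cyl_def global_fun_def comp_def)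
  also have "\<dots> = real (card {ws. length ws = length V' \<and> f (map c V) ws = q}) / real CARD('r) ^ length V'"
    by (subst measure_bernoulli_unif_word_in[OF assms]) simp
  finally show ?thesis .
qed

lemma card_words_in_bounds:
  fixes P :: "'r::finite list set"
  assumes "ws \<in> P" "length ws = n" "ws' \<notin> P" "length ws' = n"
  shows "0 < card {ws. length ws = n \<and> ws \<in> P}"
    and "card {ws. length ws = n \<and> ws \<in> P} < CARD('r) ^ n"
proof -
  have all_words: "finite {xs. set xs \<subseteq> (UNIV :: 'r set) \<and> length xs = n}"
    by (rule finite_lists_length_eq) simp
  have sub: "{ws. length ws = n \<and> ws \<in> P} \<subset> {xs. set xs \<subseteq> UNIV \<and> length xs = n}"
    using assms by auto
  show "0 < card {ws. length ws = n \<and> ws \<in> P}"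
    using assms finite_subset[OF psubset_imp_subset[OF sub] all_words] by (auto simp: card_gt_0_iff)
  show "card {ws. length ws = n \<and> ws \<in> P} < CARD('r) ^ n"
    using psubset_card_mono[OF all_words sub] card_lists_length_eq[of "UNIV :: 'r set" n] by simp
qed

lemma ex_map_eq:
  assumes "distinct V" "length qs = length V"
  shows "\<exists>c. map c V = qs"
proof
  show "map (\<lambda>z. the (map_of (zip V qs) z)) V = qs"
    using assms by (intro nth_equalityI) (auto simp: map_of_zip_nth)
qed

lemma coprime_if_prime_factors_disjoint:
  fixes a b :: nat
  assumes "a \<noteq> 0" "b \<noteq> 0" "prime_factors a \<inter> prime_factors b = {}"
  shows "coprime a b"
  by (metis assms gcd_nat.eq_neutr_iff is_unit_gcd prime_factorization_empty_iff
      prime_factors_gcd set_mset_eq_empty_iff)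

lemma power_dvd_numerator_if_coprime:
  fixes a b k m n N :: nat
  assumes "coprime a b" "a \<noteq> 0" "b \<noteq> 0"
    and "real k / real a ^ n = real m / real b ^ N"
  shows "a ^ n dvd k"
proof -
  have "real (k * b ^ N) = real (m * a ^ n)"
    using assms(2-4) by (simp add: field_simps)
  then have "a ^ n dvd k * b ^ N"
    by (metis dvd_triv_right of_nat_eq_iff)
  moreover have "coprime (a ^ n) (b ^ N)"
    using assms(1) by simp
  ultimately show ?thesis
    using coprime_dvd_mult_left_iff by blast
qed

theorem lemma2:
  fixes V1 V1' V2 V2' :: "int list"
    and f1 :: "'q::finite list \<Rightarrow> 'r1::finite list \<Rightarrow> 'q"
    and f2 :: "'q list \<Rightarrow> 'r2::finite list \<Rightarrow> 'q"
  assumes "stoch_ca V1 V1' f1" and "stoch_ca V2 V2' f2"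
    and "\<not> deterministic V1 V1' f1" and "\<not> deterministic V2 V2' f2"
    and "stoch_global (global_fun V1 V1' f1) = stoch_global (global_fun V2 V2' f2)"
  shows "prime_factors CARD('r1) \<inter> prime_factors CARD('r2) \<noteq> {}"
proof
  assume "prime_factors CARD('r1) \<inter> prime_factors CARD('r2) = {}"
  then have coprime: "coprime CARD('r1) CARD('r2)"
    by (simp add: coprime_if_prime_factors_disjoint)
  obtain qs ss ss' where lengths: "length qs = length V1" "length ss = length V1'" "length ss' = length V1'"
    and "f1 qs ss \<noteq> f1 qs ss'"
    using assms(3) by (auto simp: deterministic_def)
  moreover obtain c where "map c V1 = qs"
    using assms(1) lengths ex_map_eq by (auto simp: stoch_ca_def)
  ultimately have k1_bounds:
      "0 < card {ws. length ws = length V1' \<and> f1 (map c V1) ws = f1 qs ss}"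
      "card {ws. length ws = length V1' \<and> f1 (map c V1) ws = f1 qs ss} < CARD('r1) ^ length V1'"
    using card_words_in_bounds[of ss "{ws. f1 qs ws = f1 qs ss}" _ ss'] by auto
  let ?q = "f1 qs ss"
  have "stoch_global (global_fun V1 V1' f1) c [?q] 0 = stoch_global (global_fun V2 V2' f2) c [?q] 0"
    using assms(5) by simp
  then have "CARD('r1) ^ length V1' dvd card {ws. length ws = length V1' \<and> f1 (map c V1) ws = ?q}"
    using assms(1,2) power_dvd_numerator_if_coprime[OF coprime]
    by (simp add: stoch_ca_def stoch_global_single_cell)
  with k1_bounds show False
    using nat_dvd_not_less by blast
qed

end
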